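(* Let $S$ be a finite set of points in $\mathbb{R}^k$ with the Euclidean metric $d$, and let $(S_i,p_i,q_i,d_i)_{1\le i\le L}$ be a grid-based sparse partition of $S$ with grid box side lengths $g_i=d_i/(6k)$. Let $j=L-\lceil\log_3(2\sqrt{k})\rceil$ and assume $j\ge 1$. Then for any two distinct points $a,b\in S\setminus S_j$, $\delta(S)<d(a,b)$.
   Context: $d(x,T)=\min\{d(x,y):y\in T\setminus\{x\}\}$ and $\delta(S)=\min\{d(p,q):p,q\in S,p\ne q\}$. Grid-based sparse partition of $S$: levels $i=1,\dots,L$ with $S_1=S$; pivot $p_i$ chosen from $S_i$, $q_i$ a nearest neighbor of $p_i$ in $S_i$, $d_i=d(p_i,q_i)$; $G_i$ is the axis-aligned grid with boxes of side length $g_i=d_i/(6k)$; a point $x\in S_i$ is sparse at level $i$ if no other point of $S_i$ lies in the $3^k$ boxes of $G_i$ formed by the box containing $x$ and its bordering boxes; $S_i'$ is the set of sparse points of $S_i$; $S_{i+1}=S_i\setminus S_i'$; $S_{L+1}=\emptyset$. *)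

theory Defs
  imports "HOL-Analysis.Analysis"
begin

(* Points of R^k are modelled as real^'n with k = CARD('n); dist is Euclidean. *)

definition min_dist :: "('a::metric_space) set \<Rightarrow> real" where
  "min_dist S = Min {dist p q | p q. p \<in> S \<and> q \<in> S \<and> p \<noteq> q}"

(* y lies in the 3^k boxes formed by the box of the axis-aligned grid of side g
   (boxes [m g, (m+1) g) per coordinate) containing x and its bordering boxes *)
definition in_nbhd_boxes :: "real \<Rightarrow> real^'n \<Rightarrow> real^'n \<Rightarrow> bool" where
  "in_nbhd_boxes g x y = (\<forall>c. \<bar>\<lfloor>y $ c / g\<rfloor> - \<lfloor>x $ c / g\<rfloor>\<bar> \<le> 1)"

definition sparse_points :: "real \<Rightarrow> (real^'n) set \<Rightarrow> (real^'n) set" where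
  "sparse_points g T = {x \<in> T. \<forall>y\<in>T. y \<noteq> x \<longrightarrow> \<not> in_nbhd_boxes g x y}"

definition grid_sparse_partition ::
  "(real^'n) set \<Rightarrow> nat \<Rightarrow> (nat \<Rightarrow> (real^'n) set) \<Rightarrow> (nat \<Rightarrow> real^'n)
    \<Rightarrow> (nat \<Rightarrow> real^'n) \<Rightarrow> (nat \<Rightarrow> real) \<Rightarrow> bool" where
  "grid_sparse_partition S L Sq p q d \<longleftrightarrow>
     Sq 1 = S \<and>
     (\<forall>i\<in>{1..L}.
        p i \<in> Sq i \<and> q i \<in> Sq i \<and> q i \<noteq> p i \<and>
        (\<forall>y\<in>Sq i. y \<noteq> p i \<longrightarrow> dist (p i) (q i) \<le> dist (p i) y) \<and>
        d i = dist (p i) (q i) \<and>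
        Sq (Suc i) = Sq i - sparse_points (d i / (6 * real CARD('n))) (Sq i)) \<and>
     Sq (Suc L) = {}"

end

theory Submission
  imports Defs
begin

text \<open>
  Let K = CARD('n). If the pivot p(i+1) survives level i, some other point of S(i) lies in
  its neighbourhood boxes, and by symmetry of that relation this point survives as well; so
  the pivot distances satisfy 3 \<surd>K d(i+1) \<le> d(i). A point that leaves before level
  j = L - \<lceil>log_3 (2 \<surd>K)\<rceil> leaves at a level i with L - i > \<lceil>log_3 (2 \<surd>K)\<rceil>, where
  (3 \<surd>K)^(L - i) \<ge> 6K, whence \<delta>(S) \<le> d(L) \<le> d(i) / (6K) = g(i). If a leaves at level i
  and b not earlier, then a is sparse in S(i) \<ni> b, so d(a,b) > g(i) \<ge> \<delta>(S).
\<close>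

lemma abs_diff_gt_if_floor_quotients_far:
  fixes g x y :: real
  assumes "g > 0" and "\<not> \<bar>\<lfloor>y / g\<rfloor> - \<lfloor>x / g\<rfloor>\<bar> \<le> 1"
  shows "g < \<bar>y - x\<bar>"
proof -
  have "1 < \<bar>y / g - x / g\<bar>"
    using assms(2) by linarith
  then show ?thesis
    using assms(1) by (simp flip: diff_divide_distrib add: field_simps)
qed

lemma abs_diff_less_if_floor_quotients_near:
  fixes g x y :: real
  assumes "g > 0" and "\<bar>\<lfloor>y / g\<rfloor> - \<lfloor>x / g\<rfloor>\<bar> \<le> 1"
  shows "\<bar>y - x\<bar> < 2 * g"
proof -
  have "\<bar>y / g - x / g\<bar> < 2"
    using assms(2) by linarith
  then show ?thesis
    using assms(1) by (simp flip: diff_divide_distrib add: field_simps)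
qed

lemma in_nbhd_boxes_commute: "in_nbhd_boxes g x y \<longleftrightarrow> in_nbhd_boxes g y x"
  unfolding in_nbhd_boxes_def by (simp add: abs_minus_commute)

lemma dist_gt_if_not_in_nbhd_boxes:
  fixes x y :: "real^'n"
  assumes "g > 0" and "\<not> in_nbhd_boxes g x y"
  shows "g < dist x y"
proof -
  obtain c where "\<not> \<bar>\<lfloor>y $ c / g\<rfloor> - \<lfloor>x $ c / g\<rfloor>\<bar> \<le> 1"
    using assms(2) unfolding in_nbhd_boxes_def by blast
  then have "g < \<bar>y $ c - x $ c\<bar>"
    by (rule abs_diff_gt_if_floor_quotients_far[OF assms(1)])
  also have "\<dots> = dist (x $ c) (y $ c)"
    by (simp add: dist_real_def abs_minus_commute)
  also have "\<dots> \<le> dist x y"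
    by (rule dist_vec_nth_le)
  finally show ?thesis .
qed

lemma dist_le_if_in_nbhd_boxes:
  fixes x y :: "real^'n"
  assumes "g > 0" and "in_nbhd_boxes g x y"
  shows "dist x y \<le> 2 * g * sqrt (real CARD('n))"
proof -
  have "dist x y = L2_set (\<lambda>c. dist (x $ c) (y $ c)) UNIV"
    by (simp add: dist_vec_def)
  also have "\<dots> \<le> L2_set (\<lambda>c::'n. 2 * g) UNIV"
  proof (rule L2_set_mono)
    fix c :: 'n
    have "\<bar>y $ c - x $ c\<bar> < 2 * g"
      using assms unfolding in_nbhd_boxes_def
      by (blast intro: abs_diff_less_if_floor_quotients_near)
    then show "dist (x $ c) (y $ c) \<le> 2 * g"
      by (simp add: dist_real_def abs_minus_commute)
  qed simp
  also have "\<dots> = 2 * g * sqrt (real CARD('n))"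
    using assms(1) by (simp add: L2_set_def real_sqrt_mult)
  finally show ?thesis .
qed

lemma sparse_points_dist_gt:
  fixes x y :: "real^'n"
  assumes "g > 0" and "x \<in> sparse_points g T" and "y \<in> T" and "y \<noteq> x"
  shows "g < dist x y"
  using assms by (auto simp: sparse_points_def intro: dist_gt_if_not_in_nbhd_boxes)

lemma min_dist_le:
  fixes S :: "'a::metric_space set"
  assumes "finite S" and "x \<in> S" and "y \<in> S" and "x \<noteq> y"
  shows "min_dist S \<le> dist x y"
proof -
  have "{dist p q | p q. p \<in> S \<and> q \<in> S \<and> p \<noteq> q} \<subseteq> (\<lambda>(p, q). dist p q) ` (S \<times> S)"
    by auto
  then have "finite {dist p q | p q. p \<in> S \<and> q \<in> S \<and> p \<noteq> q}"
    using assms(1) by (meson finite_SigmaI finite_imageI finite_subset)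
  then show ?thesis
    unfolding min_dist_def using assms(2-4) by (blast intro: Min_le)
qed

lemma exists_exit_index:
  assumes "1 \<le> j" and "x \<in> A 1" and "x \<notin> A j"
  shows "\<exists>i. 1 \<le> i \<and> i < j \<and> x \<in> A i \<and> x \<notin> A (Suc i)"
  using assms
proof (induction j rule: nat_induct_at_least)
  case (Suc j)
  then show ?case
    by (cases "x \<in> A j") (auto intro: less_SucI)
qed simp

lemma log_three_two_sqrt_pos:
  fixes k :: real
  assumes "1 \<le> k"
  shows "0 < log 3 (2 * sqrt k)"
proof -
  have "1 \<le> sqrt k"
    using assms by simp
  then have "1 < 2 * sqrt k"
    by linarith
  then show ?thesis
    using assms by (subst zero_less_log_cancel_iff) auto
qed

lemma six_times_le_power_three_sqrt:
  fixes k :: real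
  assumes "1 \<le> k" and "\<lceil>log 3 (2 * sqrt k)\<rceil> < int n"
  shows "6 * k \<le> (3 * sqrt k) ^ n"
proof -
  have "1 \<le> sqrt k"
    using assms(1) by simp
  have "1 \<le> n"
    using log_three_two_sqrt_pos[OF assms(1)] assms(2) by linarith
  have "log 3 (2 * sqrt k) \<le> real (n - 1)"
    using assms(2) \<open>1 \<le> n\<close> by linarith
  then have "2 * sqrt k \<le> 3 ^ (n - 1)"
    using \<open>1 \<le> sqrt k\<close> by (simp add: log_le_iff powr_realpow)
  have "6 * k = 3 * (2 * sqrt k) * sqrt k"
    using assms(1) by simp
  also have "\<dots> \<le> 3 * 3 ^ (n - 1) * sqrt k ^ n"
    using \<open>2 * sqrt k \<le> 3 ^ (n - 1)\<close> \<open>1 \<le> sqrt k\<close> \<open>1 \<le> n\<close>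
    by (intro mult_mono mult_left_mono power_increasing[of 1, simplified]) auto
  also have "\<dots> = (3 * sqrt k) ^ n"
    using \<open>1 \<le> n\<close> by (simp add: power_mult_distrib flip: power_Suc)
  finally show ?thesis .
qed

context
  fixes S :: "(real^'n) set" and L :: nat and Sq :: "nat \<Rightarrow> (real^'n) set"
    and p q :: "nat \<Rightarrow> real^'n" and d :: "nat \<Rightarrow> real"
  assumes partition: "grid_sparse_partition S L Sq p q d"
begin

lemma grid_sparse_partition_level:
  assumes "1 \<le> i" and "i \<le> L"
  shows "p i \<in> Sq i" and "q i \<in> Sq i" and "q i \<noteq> p i" and "d i = dist (p i) (q i)"
    and "Sq (Suc i) = Sq i - sparse_points (d i / (6 * real CARD('n))) (Sq i)"
  using partition assms unfolding grid_sparse_partition_def by auto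

lemma grid_sparse_partition_pivot_dist_pos:
  assumes "1 \<le> i" and "i \<le> L"
  shows "0 < d i"
  using grid_sparse_partition_level[OF assms] by simp

lemma grid_sparse_partition_pivot_nearest:
  assumes "1 \<le> i" and "i \<le> L" and "y \<in> Sq i" and "y \<noteq> p i"
  shows "d i \<le> dist (p i) y"
  using partition assms unfolding grid_sparse_partition_def by auto

lemma grid_sparse_partition_levels_antimono:
  assumes "1 \<le> i" and "i \<le> i'" and "i' \<le> Suc L"
  shows "Sq i' \<subseteq> Sq i"
  using assms(2,3)
proof (induction i' rule: dec_induct)
  case (step n)
  have "Sq (Suc n) \<subseteq> Sq n"
    using grid_sparse_partition_level(5)[of n] assms(1) step.hyps(1) step.prems by auto
  with step show ?case
    by simp
qed simp

lemma grid_sparse_partition_pivot_dist_step: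
  assumes "1 \<le> i" and "i < L"
  shows "3 * sqrt (real CARD('n)) * d (Suc i) \<le> d i"
proof -
  define K where "K = real CARD('n)"
  define g where "g = d i / (6 * K)"
  have "0 < g"
    using grid_sparse_partition_pivot_dist_pos[of i] assms unfolding g_def K_def by simp
  have levels: "Sq (Suc i) = Sq i - sparse_points g (Sq i)"
    using grid_sparse_partition_level(5)[of i] assms unfolding g_def K_def by simp
  have "p (Suc i) \<in> Sq (Suc i)"
    using grid_sparse_partition_level(1)[of "Suc i"] assms by simp
  then obtain y where y: "y \<in> Sq i" "y \<noteq> p (Suc i)" "in_nbhd_boxes g (p (Suc i)) y"
    unfolding levels sparse_points_def by auto
  then have "y \<in> Sq (Suc i)"
    using \<open>p (Suc i) \<in> Sq (Suc i)\<close> unfolding levels sparse_points_def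
    by (auto simp: in_nbhd_boxes_commute)
  then have "d (Suc i) \<le> dist (p (Suc i)) y"
    using grid_sparse_partition_pivot_nearest[of "Suc i"] assms y(2) by simp
  also have "\<dots> \<le> 2 * g * sqrt K"
    using dist_le_if_in_nbhd_boxes[OF \<open>0 < g\<close> y(3)] unfolding K_def .
  finally have "3 * sqrt K * d (Suc i) \<le> 3 * sqrt K * (2 * g * sqrt K)"
    by (intro mult_left_mono) (simp_all add: K_def)
  also have "\<dots> = 6 * g * (sqrt K * sqrt K)"
    by algebra
  also have "\<dots> = d i"
    unfolding g_def K_def by simp
  finally show ?thesis
    unfolding K_def .
qed

lemma grid_sparse_partition_pivot_dist_decay:
  assumes "1 \<le> i" and "i \<le> L"
  shows "(3 * sqrt (real CARD('n))) ^ (L - i) * d L \<le> d i"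
  using assms(2)
proof (induction i rule: inc_induct)
  case (step n)
  let ?r = "3 * sqrt (real CARD('n))"
  have "L - n = Suc (L - Suc n)"
    using step.hyps(2) by simp
  then have "?r ^ (L - n) * d L = ?r * (?r ^ (L - Suc n) * d L)"
    by (simp only: power_Suc mult.assoc)
  also have "\<dots> \<le> ?r * d (Suc n)"
    using step.IH by (simp add: mult_left_mono)
  also have "\<dots> \<le> d n"
    using grid_sparse_partition_pivot_dist_step step.hyps assms(1) by simp
  finally show ?case .
qed simp

lemma grid_sparse_partition_min_dist_le_last_pivot_dist:
  assumes "finite S" and "1 \<le> L"
  shows "min_dist S \<le> d L"
proof -
  have "Sq 1 = S"
    using partition unfolding grid_sparse_partition_def by simp
  then have "Sq L \<subseteq> S"
    using grid_sparse_partition_levels_antimono[of 1 L] assms(2) by simp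
  then show ?thesis
    using grid_sparse_partition_level[of L] assms min_dist_le[of S "p L" "q L"] by auto
qed

lemma grid_sparse_partition_min_dist_less_dist_sparse_point:
  assumes "finite S" and "1 \<le> i" and "\<lceil>log 3 (2 * sqrt (real CARD('n)))\<rceil> < int L - int i"
    and "x \<in> Sq i - Sq (Suc i)" and "y \<in> Sq i" and "y \<noteq> x"
  shows "min_dist S < dist x y"
proof -
  define K where "K = real CARD('n)"
  have "1 \<le> K"
    unfolding K_def by simp
  have "i \<le> L"
    using log_three_two_sqrt_pos[OF \<open>1 \<le> K\<close>] assms(3) unfolding K_def by linarith
  have "min_dist S \<le> d L"
    using grid_sparse_partition_min_dist_le_last_pivot_dist assms(1,2) \<open>i \<le> L\<close> by simp
  also have "\<dots> \<le> d i / (6 * K)"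
  proof -
    have "6 * K \<le> (3 * sqrt K) ^ (L - i)"
      using six_times_le_power_three_sqrt[OF \<open>1 \<le> K\<close>] assms(3) \<open>i \<le> L\<close>
      unfolding K_def by (simp add: of_nat_diff)
    then have "6 * K * d L \<le> (3 * sqrt K) ^ (L - i) * d L"
      using grid_sparse_partition_pivot_dist_pos[of L] assms(2) \<open>i \<le> L\<close> by simp
    also have "\<dots> \<le> d i"
      using grid_sparse_partition_pivot_dist_decay assms(2) \<open>i \<le> L\<close> unfolding K_def by simp
    finally show ?thesis
      using \<open>1 \<le> K\<close> by (simp add: field_simps)
  qed
  also have "\<dots> < dist x y"
  proof (rule sparse_points_dist_gt)
    show "0 < d i / (6 * K)"
      using grid_sparse_partition_pivot_dist_pos assms(2) \<open>i \<le> L\<close> \<open>1 \<le> K\<close> by simp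
    show "x \<in> sparse_points (d i / (6 * K)) (Sq i)"
      using grid_sparse_partition_level(5) assms(2,4) \<open>i \<le> L\<close> unfolding K_def by auto
  qed (use assms(5,6) in auto)
  finally show ?thesis .
qed

end

theorem lemma6p1:
  fixes S :: "(real^'n) set" and L :: nat and Sq :: "nat \<Rightarrow> (real^'n) set"
    and p q :: "nat \<Rightarrow> real^'n" and d :: "nat \<Rightarrow> real" and j :: int
  assumes "finite S"
    and "grid_sparse_partition S L Sq p q d"
    and "j = int L - \<lceil>log 3 (2 * sqrt (real CARD('n)))\<rceil>"
    and "j \<ge> 1"
    and "a \<in> S - Sq (nat j)" and "b \<in> S - Sq (nat j)" and "a \<noteq> b"
  shows "min_dist S < dist a b"
proof -
  have "Sq 1 = S"
    using assms(2) unfolding grid_sparse_partition_def by simp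
  have "0 < log 3 (2 * sqrt (real CARD('n)))"
    by (rule log_three_two_sqrt_pos) simp
  then have "j \<le> int L"
    using assms(3) by linarith
  then have "nat j \<le> L"
    by (simp add: nat_le_iff)
  have exit_level: "\<exists>i. 1 \<le> i \<and> i < nat j \<and> x \<in> Sq i \<and> x \<notin> Sq (Suc i)"
    if "x \<in> S - Sq (nat j)" for x
    using exists_exit_index[of "nat j" x Sq] that assms(4) \<open>Sq 1 = S\<close> by simp
  have min_dist_less: "min_dist S < dist x y"
    if "1 \<le> i" "i \<le> i'" "i' < nat j" "x \<in> Sq i - Sq (Suc i)" "y \<in> Sq i'" "y \<noteq> x"
    for x y i i'
  proof (rule grid_sparse_partition_min_dist_less_dist_sparse_point[OF assms(2,1)])
    show "\<lceil>log 3 (2 * sqrt (real CARD('n)))\<rceil> < int L - int i"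
      using that(2,3) assms(3,4) by linarith
    show "y \<in> Sq i"
      using grid_sparse_partition_levels_antimono[OF assms(2) that(1,2)] that(3,5) \<open>nat j \<le> L\<close>
      by auto
  qed (use that in auto)
  obtain ia where "1 \<le> ia" "ia < nat j" "a \<in> Sq ia - Sq (Suc ia)"
    using exit_level assms(5) by blast
  moreover obtain ib where "1 \<le> ib" "ib < nat j" "b \<in> Sq ib - Sq (Suc ib)"
    using exit_level assms(6) by blast
  ultimately show ?thesis
    using min_dist_less[of ia ib a b] min_dist_less[of ib ia b a] assms(7)
    by (cases "ia \<le> ib") (auto simp: dist_commute)
qed

end
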